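(* Let $G=(V,E)$ be an undirected hypergraph in which every node has finite degree. Then $\mathsf{Hall}(G)$ equals the supremum of all $\alpha$ for which $G$ is $\alpha$-orientable, where orientations are allowed to be randomized (fractional).
   Context: For $U\subseteq V$, $E[U]\subseteq E$ is the set of edges with at least one incident node in $U$. The Hall density is $\mathsf{Hall}(G)=\inf\{|E[U]|/|U|: U\subseteq V,\ 0<|U|<\infty\}$. An orientation is a map $f:E\to V$ with $f(e)$ incident to $e$; a randomized (fractional) orientation assigns to each edge a probability distribution over its incident nodes, and the indegree of $v$ is the total (expected) amount of edges assigned to $v$. $G$ is $\alpha$-orientable if some (randomized) orientation gives every node indegree at least $\alpha$. *)

theory Defs
  imports "HOL-Probability.Probability_Mass_Function" "HOL-Library.Extended_Real"
begin

text \<open>A hypergraph is given by a node set V, an edge index set E and an incidence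
  map inc assigning to each edge its (nonempty) set of incident nodes.
  Parallel edges are allowed.\<close>

definition hypergraph :: "'v set \<Rightarrow> 'e set \<Rightarrow> ('e \<Rightarrow> 'v set) \<Rightarrow> bool" where
  "hypergraph V E inc \<longleftrightarrow> (\<forall>e\<in>E. inc e \<subseteq> V \<and> inc e \<noteq> {})"

definition finite_degrees :: "'v set \<Rightarrow> 'e set \<Rightarrow> ('e \<Rightarrow> 'v set) \<Rightarrow> bool" where
  "finite_degrees V E inc \<longleftrightarrow> (\<forall>v\<in>V. finite {e\<in>E. v \<in> inc e})"

definition edges_touching :: "'e set \<Rightarrow> ('e \<Rightarrow> 'v set) \<Rightarrow> 'v set \<Rightarrow> 'e set" where
  "edges_touching E inc U = {e\<in>E. inc e \<inter> U \<noteq> {}}"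

definition hall_density :: "'v set \<Rightarrow> 'e set \<Rightarrow> ('e \<Rightarrow> 'v set) \<Rightarrow> ereal" where
  "hall_density V E inc =
     (INF U \<in> {U. U \<subseteq> V \<and> finite U \<and> U \<noteq> {}}.
        ereal (real (card (edges_touching E inc U)) / real (card U)))"

definition frac_orientation :: "'e set \<Rightarrow> ('e \<Rightarrow> 'v set) \<Rightarrow> ('e \<Rightarrow> 'v pmf) \<Rightarrow> bool" where
  "frac_orientation E inc p \<longleftrightarrow> (\<forall>e\<in>E. set_pmf (p e) \<subseteq> inc e)"

definition indegree :: "'e set \<Rightarrow> ('e \<Rightarrow> 'v set) \<Rightarrow> ('e \<Rightarrow> 'v pmf) \<Rightarrow> 'v \<Rightarrow> real" where
  "indegree E inc p v = (\<Sum>e\<in>{e\<in>E. v \<in> inc e}. pmf (p e) v)"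

definition orientable :: "'v set \<Rightarrow> 'e set \<Rightarrow> ('e \<Rightarrow> 'v set) \<Rightarrow> real \<Rightarrow> bool" where
  "orientable V E inc \<alpha> \<longleftrightarrow>
     (\<exists>p. frac_orientation E inc p \<and> (\<forall>v\<in>V. indegree E inc p v \<ge> \<alpha>))"

end

theory Submission
  imports Defs
begin

text \<open>An \<open>\<alpha>\<close>-orientation moves at least \<open>\<alpha> |U|\<close> units of edge mass into a finite node set \<open>U\<close>,
  and all of it comes from the edges in \<open>E[U]\<close>, each contributing at most one unit; so
  \<open>\<alpha> \<le> Hall(G)\<close>. Conversely, let \<open>a/b \<le> Hall(G)\<close> be rational. Replace every node by \<open>a\<close> copies
  and every edge by \<open>b\<close> copies, a node copy being allowed to take any copy of an edge incident
  to its node. The density bound is precisely Hall's marriage condition for this bipartite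
  system, and since degrees are finite, Hall's theorem holds also for the infinite system:
  by Zorn's lemma the candidate sets shrink to a minimal family still satisfying Hall's
  condition, and such a family consists of singletons. Giving every edge the uniform
  distribution over the owners of its copies yields indegree at least \<open>a/b\<close> everywhere.\<close>

definition hall_condition :: "'a set \<Rightarrow> ('a \<Rightarrow> 'b set) \<Rightarrow> bool" where
  "hall_condition L A \<longleftrightarrow> (\<forall>S. S \<subseteq> L \<longrightarrow> finite S \<longrightarrow> card S \<le> card (\<Union>(A ` S)))"

lemma hall_condition_deletions_Union_chain:
  fixes A :: "'a \<Rightarrow> 'b set" and \<C> :: "('a \<times> 'b) set set"
  assumes fin: "\<forall>v\<in>L. finite (A v)"
    and chain: "subset.chain UNIV \<C>" and "\<C> \<noteq> {}"
    and hall: "\<forall>D\<in>\<C>. hall_condition L (\<lambda>v. {x\<in>A v. (v, x) \<notin> D})"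
  shows "hall_condition L (\<lambda>v. {x\<in>A v. (v, x) \<notin> \<Union>\<C>})"
  unfolding hall_condition_def
proof (intro allI impI)
  fix S assume S: "S \<subseteq> L" "finite S"
  have "finite (\<Union>\<C> \<inter> Sigma S A)" using S fin by auto
  then obtain D where D: "D \<in> \<C>" "\<Union>\<C> \<inter> Sigma S A \<subseteq> D"
    using finite_subset_Union_chain[OF _ _ \<open>\<C> \<noteq> {}\<close> chain] by blast
  have "(\<Union>v\<in>S. {x\<in>A v. (v, x) \<notin> \<Union>\<C>}) = (\<Union>v\<in>S. {x\<in>A v. (v, x) \<notin> D})"
    using D by blast
  with hall D S show "card S \<le> card (\<Union>v\<in>S. {x\<in>A v. (v, x) \<notin> \<Union>\<C>})"
    unfolding hall_condition_def by auto
qed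

lemma hall_condition_minimal_subfamily:
  assumes fin: "\<forall>v\<in>L. finite (A v)" and hall: "hall_condition L A"
  obtains B where "\<forall>v\<in>L. B v \<subseteq> A v" and "hall_condition L B"
    and "\<And>v x. v \<in> L \<Longrightarrow> x \<in> B v \<Longrightarrow> \<not> hall_condition L (B(v := B v - {x}))"
proof -
  define del where "del D v = {x\<in>A v. (v, x) \<notin> D}" for D v
  define \<D> where "\<D> = {D. hall_condition L (del D)}"
  have "\<forall>\<C>\<in>chains \<D>. \<Union>\<C> \<in> \<D>"
  proof
    fix \<C> assume \<C>: "\<C> \<in> chains \<D>"
    show "\<Union>\<C> \<in> \<D>"
    proof (cases "\<C> = {}")
      case True
      have "del {} = A" unfolding del_def by auto
      with True hall show ?thesis unfolding \<D>_def by simp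
    next
      case False
      have "subset.chain UNIV \<C>" using \<C> unfolding chains_alt_def subset.chain_def by auto
      then have "hall_condition L (del (\<Union>\<C>))"
        using hall_condition_deletions_Union_chain[OF fin _ False] \<C>
        unfolding del_def \<D>_def chains_def by auto
      then show ?thesis unfolding \<D>_def by simp
    qed
  qed
  then obtain M where M: "M \<in> \<D>" and max: "\<forall>X\<in>\<D>. M \<subseteq> X \<longrightarrow> X = M"
    using Zorn_Lemma by blast
  show ?thesis
  proof (rule that)
    show "\<forall>v\<in>L. del M v \<subseteq> A v" unfolding del_def by auto
    show "hall_condition L (del M)" using M unfolding \<D>_def by auto
  next
    fix v x assume v: "v \<in> L" and x: "x \<in> del M v"
    have upd: "(del M)(v := del M v - {x}) = del (insert (v, x) M)"
      unfolding del_def by (auto simp: fun_eq_iff)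
    have "insert (v, x) M \<notin> \<D>" using max x unfolding del_def by auto
    then show "\<not> hall_condition L ((del M)(v := del M v - {x}))"
      unfolding upd \<D>_def by simp
  qed
qed

lemma hall_condition_delete_violation:
  assumes hall: "hall_condition L B" and v: "v \<in> L"
    and viol: "\<not> hall_condition L (B(v := B v - {x}))"
  obtains T where "T \<subseteq> L - {v}" and "finite T"
    and "card (\<Union>(B ` T) \<union> (B v - {x})) \<le> card T"
proof -
  let ?B' = "B(v := B v - {x})"
  obtain S where S: "S \<subseteq> L" "finite S" "card (\<Union>(?B' ` S)) < card S"
    using viol unfolding hall_condition_def by (meson not_le)
  have "v \<in> S"
  proof (rule ccontr)
    assume "v \<notin> S"
    then have "\<Union>(?B' ` S) = \<Union>(B ` S)" by auto
    with hall S show False unfolding hall_condition_def by (metis not_le)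
  qed
  define T where "T = S - {v}"
  have eq: "\<Union>(?B' ` S) = \<Union>(B ` T) \<union> (B v - {x})"
    using \<open>v \<in> S\<close> unfolding T_def by auto
  have card_S: "card S = card T + 1"
    using \<open>v \<in> S\<close> S(2) unfolding T_def by (metis card.remove Suc_eq_plus1)
  have "card (\<Union>(B ` T) \<union> (B v - {x})) \<le> card T"
    using S(3) unfolding eq card_S by simp
  moreover have "T \<subseteq> L - {v}" "finite T" using S(1,2) unfolding T_def by auto
  ultimately show ?thesis using that by blast
qed

lemma minimal_hall_family_singleton:
  assumes fin: "\<forall>v\<in>L. finite (B v)" and hall: "hall_condition L B"
    and minimal: "\<And>v x. v \<in> L \<Longrightarrow> x \<in> B v \<Longrightarrow> \<not> hall_condition L (B(v := B v - {x}))"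
    and v: "v \<in> L"
  shows "\<exists>x. B v = {x}"
proof -
  have hallS: "card S \<le> card (\<Union>(B ` S))" if "S \<subseteq> L" "finite S" for S
    using hall that unfolding hall_condition_def by blast
  have "B v \<noteq> {}" using hallS[of "{v}"] v by auto
  moreover have "x1 = x2" if x1: "x1 \<in> B v" and x2: "x2 \<in> B v" for x1 x2
  proof (rule ccontr)
    assume "x1 \<noteq> x2"
    obtain T1 where T1: "T1 \<subseteq> L - {v}" "finite T1"
      and le1: "card (\<Union>(B ` T1) \<union> (B v - {x1})) \<le> card T1"
      using hall_condition_delete_violation[OF hall v minimal[OF v x1]] .
    obtain T2 where T2: "T2 \<subseteq> L - {v}" "finite T2"
      and le2: "card (\<Union>(B ` T2) \<union> (B v - {x2})) \<le> card T2"
      using hall_condition_delete_violation[OF hall v minimal[OF v x2]] .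
    define X1 where "X1 = \<Union>(B ` T1) \<union> (B v - {x1})"
    define X2 where "X2 = \<Union>(B ` T2) \<union> (B v - {x2})"
    have fin12: "finite X1" "finite X2"
      unfolding X1_def X2_def using fin T1 T2 v by auto
    \<comment> \<open>As \<open>x1 \<noteq> x2\<close>, the sets \<open>X1\<close>, \<open>X2\<close> together cover \<open>B v\<close>; Hall for \<open>{v} \<union> T1 \<union> T2\<close>
      and for \<open>T1 \<inter> T2\<close> then contradicts the submodularity of \<open>card\<close>.\<close>
    have "card (insert v (T1 \<union> T2)) \<le> card (\<Union>(B ` insert v (T1 \<union> T2)))"
      by (rule hallS) (use T1 T2 v in auto)
    also have "\<dots> \<le> card (X1 \<union> X2)"
      using \<open>x1 \<noteq> x2\<close> fin12 unfolding X1_def X2_def by (intro card_mono) auto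
    moreover have "card (insert v (T1 \<union> T2)) = card (T1 \<union> T2) + 1"
      using T1 T2 by (subst card_insert_disjoint) auto
    ultimately have union: "card (T1 \<union> T2) + 1 \<le> card (X1 \<union> X2)" by simp
    have "card (T1 \<inter> T2) \<le> card (\<Union>(B ` (T1 \<inter> T2)))"
      by (rule hallS) (use T1 T2 in auto)
    also have "\<dots> \<le> card (X1 \<inter> X2)"
      using fin12 unfolding X1_def X2_def by (intro card_mono) auto
    finally have inter: "card (T1 \<inter> T2) \<le> card (X1 \<inter> X2)" .
    have "card X1 + card X2 = card (X1 \<union> X2) + card (X1 \<inter> X2)"
      using card_Un_Int fin12 by blast
    moreover have "card T1 + card T2 = card (T1 \<union> T2) + card (T1 \<inter> T2)"
      using card_Un_Int T1 T2 by blast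
    ultimately show False
      using union inter le1 le2 unfolding X1_def X2_def by linarith
  qed
  ultimately show ?thesis by blast
qed

theorem hall_marriage_infinite:
  assumes fin: "\<forall>v\<in>L. finite (A v)" and hall: "hall_condition L A"
  obtains f where "inj_on f L" and "\<forall>v\<in>L. f v \<in> A v"
proof -
  obtain B where BA: "\<forall>v\<in>L. B v \<subseteq> A v" and hallB: "hall_condition L B"
    and minimal: "\<And>v x. v \<in> L \<Longrightarrow> x \<in> B v \<Longrightarrow> \<not> hall_condition L (B(v := B v - {x}))"
    using hall_condition_minimal_subfamily[OF fin hall] by blast
  have finB: "\<forall>v\<in>L. finite (B v)" using fin BA finite_subset by blast
  define f where "f v = the_elem (B v)" for v
  have single: "B v = {f v}" if "v \<in> L" for v
    using minimal_hall_family_singleton[OF finB hallB minimal that]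
    unfolding f_def by (metis the_elem_eq)
  show ?thesis
  proof (rule that)
    show "\<forall>v\<in>L. f v \<in> A v" using single BA by blast
    show "inj_on f L"
    proof (rule inj_onI)
      fix v w assume vw: "v \<in> L" "w \<in> L" "f v = f w"
      have "card {v, w} \<le> card (\<Union>(B ` {v, w}))"
        by (rule hallB[unfolded hall_condition_def, rule_format]) (use vw in auto)
      also have "\<Union>(B ` {v, w}) = {f v}" using single vw by auto
      finally show "v = w" by (cases "v = w") auto
    qed
  qed
qed

lemma pmf_map_pmf_of_set:
  assumes "finite B" "B \<noteq> {}"
  shows "pmf (map_pmf g (pmf_of_set B)) y = card {x\<in>B. g x = y} / card B"
proof -
  have "pmf (map_pmf g (pmf_of_set B)) y = measure (measure_pmf (pmf_of_set B)) (g -` {y})"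
    by (rule pmf_map)
  also have "\<dots> = card (B \<inter> g -` {y}) / card B"
    using assms by (simp add: measure_pmf_of_set)
  also have "B \<inter> g -` {y} = {x\<in>B. g x = y}" by auto
  finally show ?thesis .
qed

lemma finite_edges_touching:
  assumes "finite_degrees V E inc" "U \<subseteq> V" "finite U"
  shows "finite (edges_touching E inc U)"
proof (rule finite_subset)
  show "edges_touching E inc U \<subseteq> (\<Union>v\<in>U. {e\<in>E. v \<in> inc e})"
    unfolding edges_touching_def by blast
  show "finite (\<Union>v\<in>U. {e\<in>E. v \<in> inc e})"
    using assms unfolding finite_degrees_def by blast
qed

lemma ereal_le_hall_density_iff:
  "ereal \<alpha> \<le> hall_density V E inc \<longleftrightarrow>
     (\<forall>U. U \<subseteq> V \<longrightarrow> finite U \<longrightarrow> \<alpha> * card U \<le> card (edges_touching E inc U))"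
proof -
  have key: "\<alpha> \<le> card (edges_touching E inc U) / card U \<longleftrightarrow> \<alpha> * card U \<le> card (edges_touching E inc U)"
    if "finite U" "U \<noteq> {}" for U
    using that by (simp add: pos_le_divide_eq card_gt_0_iff)
  show ?thesis
    unfolding hall_density_def le_INF_iff
  proof (intro iffI allI impI ballI)
    fix U assume le: "\<forall>U\<in>{U. U \<subseteq> V \<and> finite U \<and> U \<noteq> {}}.
        ereal \<alpha> \<le> ereal (card (edges_touching E inc U) / card U)"
      and U: "U \<subseteq> V" "finite U"
    show "\<alpha> * card U \<le> card (edges_touching E inc U)"
      using le U key[of U] by (cases "U = {}") auto
  next
    fix U assume "\<forall>U. U \<subseteq> V \<longrightarrow> finite U \<longrightarrow> \<alpha> * card U \<le> card (edges_touching E inc U)"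
      and "U \<in> {U. U \<subseteq> V \<and> finite U \<and> U \<noteq> {}}"
    then show "ereal \<alpha> \<le> ereal (card (edges_touching E inc U) / card U)"
      using key[of U] by auto
  qed
qed

lemma sum_indegree_le_card_edges_touching:
  assumes fd: "finite_degrees V E inc" and U: "U \<subseteq> V" "finite U"
  shows "(\<Sum>v\<in>U. indegree E inc p v) \<le> card (edges_touching E inc U)"
proof -
  define EU where "EU = edges_touching E inc U"
  have fin: "finite EU" unfolding EU_def using finite_edges_touching[OF fd U] .
  have "indegree E inc p v = (\<Sum>e\<in>EU. if v \<in> inc e then pmf (p e) v else 0)" if "v \<in> U" for v
  proof -
    have "{e\<in>E. v \<in> inc e} = {e\<in>EU. v \<in> inc e}"
      using that unfolding EU_def edges_touching_def by blast
    then show ?thesis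
      unfolding indegree_def using fin by (simp add: sum.inter_filter)
  qed
  then have "(\<Sum>v\<in>U. indegree E inc p v) = (\<Sum>e\<in>EU. \<Sum>v\<in>U. if v \<in> inc e then pmf (p e) v else 0)"
    by (simp add: sum.swap[of _ EU])
  also have "\<dots> \<le> (\<Sum>e\<in>EU. 1)"
  proof (rule sum_mono)
    fix e
    have "(\<Sum>v\<in>U. if v \<in> inc e then pmf (p e) v else 0) \<le> (\<Sum>v\<in>U. pmf (p e) v)"
      by (rule sum_mono) auto
    also have "\<dots> = measure (measure_pmf (p e)) U"
      using U(2) by (simp add: measure_measure_pmf_finite)
    also have "\<dots> \<le> 1" by (rule measure_pmf.prob_le_1)
    finally show "(\<Sum>v\<in>U. if v \<in> inc e then pmf (p e) v else 0) \<le> 1" .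
  qed
  finally show ?thesis unfolding EU_def by simp
qed

lemma orientable_le_hall_density:
  assumes fd: "finite_degrees V E inc" and "orientable V E inc \<alpha>"
  shows "ereal \<alpha> \<le> hall_density V E inc"
  unfolding ereal_le_hall_density_iff
proof (intro allI impI)
  fix U assume U: "U \<subseteq> V" "finite U"
  obtain p where p: "\<forall>v\<in>V. \<alpha> \<le> indegree E inc p v"
    using assms(2) unfolding orientable_def by blast
  have "\<alpha> * card U = (\<Sum>v\<in>U. \<alpha>)" by simp
  also have "\<dots> \<le> (\<Sum>v\<in>U. indegree E inc p v)" using p U by (intro sum_mono) auto
  also have "\<dots> \<le> card (edges_touching E inc U)"
    by (rule sum_indegree_le_card_edges_touching[OF fd U])
  finally show "\<alpha> * card U \<le> card (edges_touching E inc U)" .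
qed

lemma orientable_mono:
  assumes "orientable V E inc \<alpha>" "\<beta> \<le> \<alpha>"
  shows "orientable V E inc \<beta>"
  using assms unfolding orientable_def by force

lemma orientable_zero:
  assumes "hypergraph V E inc"
  shows "orientable V E inc 0"
proof -
  define p where "p e = return_pmf (SOME v. v \<in> inc e)" for e
  have "frac_orientation E inc p"
    using assms unfolding frac_orientation_def hypergraph_def p_def by (auto simp: some_in_eq)
  moreover have "\<forall>v\<in>V. 0 \<le> indegree E inc p v"
    unfolding indegree_def by (simp add: sum_nonneg)
  ultimately show ?thesis unfolding orientable_def by blast
qed

lemma hall_condition_blowup:
  fixes a b :: nat
  assumes "ereal (a / b) \<le> hall_density V E inc" "b > 0"
  shows "hall_condition (V \<times> {..<a}) (\<lambda>(v, i). {e\<in>E. v \<in> inc e} \<times> {..<b})"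
  unfolding hall_condition_def
proof (intro allI impI)
  fix S assume S: "S \<subseteq> V \<times> {..<a}" "finite S"
  define U where "U = fst ` S"
  have U: "U \<subseteq> V" "finite U" using S unfolding U_def by auto
  have "card S \<le> card (U \<times> {..<a})"
    using S U unfolding U_def by (intro card_mono) force+
  also have "\<dots> \<le> card (edges_touching E inc U) * b"
  proof -
    have "a / b * card U \<le> card (edges_touching E inc U)"
      using assms(1) U unfolding ereal_le_hall_density_iff by blast
    then have "real (card U * a) \<le> real (card (edges_touching E inc U) * b)"
      using assms(2) by (simp add: field_simps)
    then show ?thesis unfolding of_nat_le_iff by (simp add: card_cartesian_product)
  qed
  also have "\<dots> = card (\<Union>x\<in>S. (\<lambda>(v, i). {e\<in>E. v \<in> inc e} \<times> {..<b}) x)"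
  proof -
    have "(\<Union>x\<in>S. (\<lambda>(v, i). {e\<in>E. v \<in> inc e} \<times> {..<b}) x) = edges_touching E inc U \<times> {..<b}"
      unfolding U_def edges_touching_def by force
    then show ?thesis by (simp add: card_cartesian_product)
  qed
  finally show "card S \<le> card (\<Union>x\<in>S. (\<lambda>(v, i). {e\<in>E. v \<in> inc e} \<times> {..<b}) x)" .
qed

lemma orientable_of_blowup_matching:
  fixes a b :: nat and f :: "'v \<times> nat \<Rightarrow> 'e \<times> nat"
  assumes hg: "hypergraph V E inc" and fd: "finite_degrees V E inc" and "b > 0"
    and inj: "inj_on f (V \<times> {..<a})"
    and match: "\<And>v i. v \<in> V \<Longrightarrow> i < a \<Longrightarrow> f (v, i) \<in> {e\<in>E. v \<in> inc e} \<times> {..<b}"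
  shows "orientable V E inc (a / b)"
proof -
  let ?L = "V \<times> {..<a}"
  define owner where "owner c =
    (if c \<in> f ` ?L then fst (inv_into ?L f c) else (SOME v. v \<in> inc (fst c)))" for c
  have owner_f: "owner (f (v, i)) = v" if "v \<in> V" "i < a" for v i
    using that inj unfolding owner_def by auto
  have owner_inc: "owner (e, j) \<in> inc e" if "e \<in> E" for e j
  proof (cases "(e, j) \<in> f ` ?L")
    case True
    then obtain v i where "v \<in> V" "i < a" "f (v, i) = (e, j)" by auto
    with match owner_f show ?thesis by force
  next
    case False
    with hg \<open>e \<in> E\<close> show ?thesis
      unfolding owner_def hypergraph_def by (auto simp: some_in_eq)
  qed
  define p where "p e = map_pmf (\<lambda>j. owner (e, j)) (pmf_of_set {..<b})" for e
  have "frac_orientation E inc p"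
    unfolding frac_orientation_def p_def using \<open>b > 0\<close> owner_inc by auto
  moreover have "real a / b \<le> indegree E inc p v" if v: "v \<in> V" for v
  proof -
    define D where "D = {e\<in>E. v \<in> inc e}"
    define W where "W = {c \<in> D \<times> {..<b}. owner c = v}"
    have finD: "finite D" using fd v unfolding finite_degrees_def D_def by blast
    have "pmf (p e) v = card {j\<in>{..<b}. owner (e, j) = v} / b" for e
      unfolding p_def using \<open>b > 0\<close> by (subst pmf_map_pmf_of_set) auto
    then have "indegree E inc p v = (\<Sum>e\<in>D. real (card {j\<in>{..<b}. owner (e, j) = v})) / b"
      unfolding indegree_def D_def[symmetric] by (simp add: sum_divide_distrib)
    also have "(\<Sum>e\<in>D. real (card {j\<in>{..<b}. owner (e, j) = v})) = card W"
    proof -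
      have "W = Sigma D (\<lambda>e. {j\<in>{..<b}. owner (e, j) = v})" unfolding W_def by auto
      then show ?thesis using finD by (simp add: card_SigmaI)
    qed
    finally have indeg: "indegree E inc p v = card W / b" .
    have "card (f ` ({v} \<times> {..<a})) = card ({v} \<times> {..<a})"
      using v by (intro card_image inj_on_subset[OF inj]) auto
    then have "a = card (f ` ({v} \<times> {..<a}))" by (simp add: card_cartesian_product)
    also have "\<dots> \<le> card W"
    proof (rule card_mono)
      show "finite W" unfolding W_def using finD by auto
      show "f ` ({v} \<times> {..<a}) \<subseteq> W"
      proof
        fix c assume "c \<in> f ` ({v} \<times> {..<a})"
        then obtain i where "i < a" "c = f (v, i)" by blast
        then show "c \<in> W" using match[OF v] owner_f[OF v] unfolding W_def D_def by simp
      qed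
    qed
    finally show ?thesis unfolding indeg using \<open>b > 0\<close> by (simp add: divide_right_mono)
  qed
  ultimately show ?thesis unfolding orientable_def by blast
qed

lemma orientable_of_ratio_le_hall_density:
  fixes a b :: nat
  assumes hg: "hypergraph V E inc" and fd: "finite_degrees V E inc"
    and "b > 0" and le: "ereal (a / b) \<le> hall_density V E inc"
  shows "orientable V E inc (a / b)"
proof -
  have "\<forall>x\<in>V \<times> {..<a}. finite ((\<lambda>(v, i). {e\<in>E. v \<in> inc e} \<times> {..<b}) x)"
    using fd unfolding finite_degrees_def by auto
  then obtain f where "inj_on f (V \<times> {..<a})"
    and "\<forall>x\<in>V \<times> {..<a}. f x \<in> (\<lambda>(v, i). {e\<in>E. v \<in> inc e} \<times> {..<b}) x"
    using hall_marriage_infinite hall_condition_blowup[OF le \<open>b > 0\<close>] by blast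
  then show ?thesis
    using orientable_of_blowup_matching[OF hg fd \<open>b > 0\<close>] by auto
qed

lemma orientable_of_less_hall_density:
  assumes hg: "hypergraph V E inc" and fd: "finite_degrees V E inc"
    and less: "ereal r < hall_density V E inc"
  shows "orientable V E inc r"
proof (cases "r \<le> 0")
  case True
  then show ?thesis using orientable_mono[OF orientable_zero[OF hg]] by blast
next
  case False
  obtain s where s: "r < s" "ereal s < hall_density V E inc"
    using ereal_dense2[OF less] by auto
  obtain q where "q \<in> \<rat>" "r < q" "q < s" using Rats_dense_in_real[OF s(1)] by blast
  then obtain m n :: int where "n > 0" and q: "q = m / n" by (elim Rats_cases') auto
  moreover have "0 < q" using False \<open>r < q\<close> by linarith
  ultimately have "m > 0" by (simp add: zero_less_divide_iff)
  with q \<open>n > 0\<close> have "q = nat m / nat n" by simp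
  moreover have "ereal q \<le> hall_density V E inc"
    using \<open>q < s\<close> s(2) by (metis ereal_less_eq(3) less_imp_le order_trans)
  ultimately have "orientable V E inc q"
    using orientable_of_ratio_le_hall_density[OF hg fd, of "nat n" "nat m"] \<open>n > 0\<close> by simp
  then show ?thesis by (rule orientable_mono) (use \<open>r < q\<close> in simp)
qed

theorem propositionB1:
  fixes V :: "'v set" and E :: "'e set" and inc :: "'e \<Rightarrow> 'v set"
  assumes "hypergraph V E inc"
    and "finite_degrees V E inc"
  shows "hall_density V E inc = (SUP \<alpha> \<in> {\<alpha>. orientable V E inc \<alpha>}. ereal \<alpha>)"
proof (rule antisym)
  show "(SUP \<alpha> \<in> {\<alpha>. orientable V E inc \<alpha>}. ereal \<alpha>) \<le> hall_density V E inc"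
    using orientable_le_hall_density[OF assms(2)] by (auto intro: SUP_least)
  show "hall_density V E inc \<le> (SUP \<alpha> \<in> {\<alpha>. orientable V E inc \<alpha>}. ereal \<alpha>)"
  proof (rule dense_le)
    fix y assume y: "y < hall_density V E inc"
    show "y \<le> (SUP \<alpha> \<in> {\<alpha>. orientable V E inc \<alpha>}. ereal \<alpha>)"
    proof (cases y)
      case (real r)
      with orientable_of_less_hall_density[OF assms] y show ?thesis
        by (auto intro: SUP_upper)
    qed (use y in auto)
  qed
qed

end
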